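(* Let $R$ be the holistic system robustness random variable (defined in the context), with distribution $\pi_R$, so that $\mathbb{P}_{\pi_R}[-R\le a]=1$. Let $\alpha\in(0,1]$ and define \[ L(x,\mu,t)=t\left(\mu+e^{\frac{x}{t}-\mu-\ln(\alpha)-1}\right),\qquad u_b(\mu,t)=L(a,\mu,t). \] For $N$ independent samples $r_1,\dots,r_N$ of $R$, let $\zeta^*_N(\mu,t)=\max_{1\le k\le N}L(-r_k,\mu,t)$. Then for all $\epsilon\in[0,1]$, \[ \mathbb{P}^N_{\pi_R}\left[r^*_E\triangleq\inf_{\mu\in\mathbb{R},\ t>0}\zeta^*_N(\mu,t)(1-\epsilon)+u_b(\mu,t)\epsilon\ \ge\ \mathrm{EVaR}_\alpha(-R)\right]\ge 1-(1-\epsilon)^N. \]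
   Context: System setting: $\dot x = f(x,u)+\xi$, $x\in\mathcal{X}\subset\mathbb{R}^n$, $u=U(x,\theta)\in\mathcal{U}\subset\mathbb{R}^m$, $\theta\in\Theta\subset\mathbb{R}^p$ a parameter fixed along a trajectory, and $\xi$ stochastic noise with unknown distribution $\pi_\xi(x,u,t)$. $x^\theta$ denotes the resulting closed-loop state signal in $\mathcal{S}=\{s:\mathbb{R}_{\ge0}\to\mathbb{R}^n\}$ from an initial condition $x_0\in\mathcal{X}_0\subseteq\mathcal{X}$. A robustness metric is a function $\rho:\mathcal{S}\to[-a,b]$ with $a,b>0$ such that $\rho(s)\ge0$ only for signals exhibiting desired properties. The holistic system robustness $R$ is the scalar random variable whose samples are $r=\rho(x^\theta)$, where $(x_0,\theta)$ is sampled uniformly from $\mathcal{X}_0\times\Theta$. Entropic-Value-at-Risk: $\mathrm{EVaR}_\alpha(Z)=\inf_{z>0}\frac1z\ln\left(\frac{\mathbb{E}[e^{zZ}]}{\alpha}\right)$. $\zeta^*_N(\mu,t)$ is the solution of $\min_\zeta\zeta$ s.t. $\zeta\ge L(-r_i,\mu,t)$ for all $i$; $\mathbb{P}^N_{\pi_R}$ is the $N$-fold product measure of the i.i.d. sample. *)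

theory Defs
  imports "HOL-Probability.Probability"
begin

definition EVaR :: "'a measure \<Rightarrow> real \<Rightarrow> ('a \<Rightarrow> real) \<Rightarrow> real" where
  "EVaR M \<alpha> X = (INF z \<in> {0<..}. (1 / z) * ln ((\<integral>x. exp (z * X x) \<partial>M) / \<alpha>))"

definition Lfun :: "real \<Rightarrow> real \<Rightarrow> real \<Rightarrow> real \<Rightarrow> real" where
  "Lfun \<alpha> x \<mu> t = t * (\<mu> + exp (x / t - \<mu> - ln \<alpha> - 1))"

definition zeta_star :: "real \<Rightarrow> nat \<Rightarrow> (nat \<Rightarrow> real) \<Rightarrow> real \<Rightarrow> real \<Rightarrow> real" where
  "zeta_star \<alpha> N r \<mu> t = Max ((\<lambda>k. Lfun \<alpha> (- r k) \<mu> t) ` {..<N})"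

end

theory Submission
  imports Defs
begin

text \<open>Fix \<mu> and t > 0. By definition EVaR(-R) \<le> t ln(E[exp(-R/t)] / \<alpha>), and the tangent-line bound
  ln w \<le> \<mu> + exp(-\<mu> - 1) w turns the right-hand side into exactly E[L(-R, \<mu>, t)].
  Since L is increasing in its first argument and -R \<le> a, this expectation is at most
  L(-s, \<mu>, t)(1 - \<epsilon>) + L(a, \<mu>, t) \<epsilon> whenever P[R < s] \<le> \<epsilon>. So the estimate dominates
  EVaR(-R) as soon as one sample r_k satisfies P[R < r_k] \<le> \<epsilon>. A sample fails this only
  when it lies above the \<epsilon>-quantile of R, which happens with probability at most 1 - \<epsilon>;
  by independence all N samples fail with probability at most (1 - \<epsilon>)^N.\<close>

lemma ln_le_tangent:
  fixes w \<mu> :: real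
  assumes "0 < w"
  shows "ln w \<le> \<mu> + exp (- \<mu> - 1) * w"
proof -
  have "ln w - \<mu> \<le> exp (ln w - \<mu> - 1)"
    using exp_ge_add_one_self[of "ln w - \<mu> - 1"] by simp
  also have "\<dots> = exp (- \<mu> - 1) * w"
    using assms by (simp add: exp_diff exp_minus exp_add field_simps)
  finally show ?thesis by simp
qed

lemma Lfun_eq:
  "Lfun \<alpha> x \<mu> t = t * \<mu> + t * exp (- \<mu> - ln \<alpha> - 1) * exp (x / t)"
proof -
  have "x / t - \<mu> - ln \<alpha> - 1 = (- \<mu> - ln \<alpha> - 1) + x / t" by simp
  then show ?thesis
    unfolding Lfun_def by (metis distrib_left exp_add mult.assoc)
qed

lemma Lfun_mono:
  assumes "0 < t" and "x \<le> y"
  shows "Lfun \<alpha> x \<mu> t \<le> Lfun \<alpha> y \<mu> t"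
  using assms by (auto simp: Lfun_def divide_right_mono intro!: mult_left_mono)

lemma le_Lfun:
  assumes "0 < t" and "0 < \<alpha>" and "\<alpha> \<le> 1"
  shows "x \<le> Lfun \<alpha> x \<mu> t"
proof -
  let ?s = "x / t - \<mu> - ln \<alpha> - 1"
  have "t * (\<mu> + 1 + ?s) \<le> t * (\<mu> + exp ?s)"
    using assms exp_ge_add_one_self[of ?s] by (intro mult_left_mono) auto
  moreover have "t * (\<mu> + 1 + ?s) = x - t * ln \<alpha>"
    using assms by (simp add: field_simps)
  moreover have "t * ln \<alpha> \<le> 0"
    using assms by (intro mult_nonneg_nonpos) auto
  ultimately show ?thesis unfolding Lfun_def by linarith
qed

lemma (in prob_space) integrable_exp_mult:
  fixes X :: "'a \<Rightarrow> real"
  assumes "X \<in> borel_measurable M" and "AE x in M. X x \<le> hi" and "0 \<le> z"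
  shows "integrable M (\<lambda>x. exp (z * X x))"
proof (rule integrable_const_bound[where B = "exp (z * hi)"])
  show "AE x in M. norm (exp (z * X x)) \<le> exp (z * hi)"
    using assms(2) by eventually_elim (use assms(3) in \<open>simp add: mult_left_mono\<close>)
qed (use assms(1) in simp)

lemma (in prob_space) exp_le_integral_exp_mult:
  fixes X :: "'a \<Rightarrow> real"
  assumes "X \<in> borel_measurable M" and bounds: "AE x in M. lo \<le> X x \<and> X x \<le> hi"
    and "0 \<le> z"
  shows "exp (z * lo) \<le> (\<integral>x. exp (z * X x) \<partial>M)"
proof -
  have "AE x in M. X x \<le> hi"
    using bounds by (auto elim: eventually_mono)
  moreover have "AE x in M. exp (z * lo) \<le> exp (z * X x)"
    using bounds by eventually_elim (use \<open>0 \<le> z\<close> in \<open>simp add: mult_left_mono\<close>)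
  ultimately have "(\<integral>x. exp (z * lo) \<partial>M) \<le> (\<integral>x. exp (z * X x) \<partial>M)"
    using \<open>0 \<le> z\<close> by (intro integral_mono_AE integrable_exp_mult[OF assms(1)]) auto
  then show ?thesis by (simp add: prob_space)
qed

lemma (in prob_space) EVaR_le:
  fixes X :: "'a \<Rightarrow> real"
  assumes "X \<in> borel_measurable M" and bounds: "AE x in M. lo \<le> X x \<and> X x \<le> hi"
    and "0 < \<alpha>" and "\<alpha> \<le> 1" and "0 < z"
  shows "EVaR M \<alpha> X \<le> 1 / z * ln ((\<integral>x. exp (z * X x) \<partial>M) / \<alpha>)"
  unfolding EVaR_def
proof (rule cINF_lower)
  show "bdd_below ((\<lambda>z. 1 / z * ln ((\<integral>x. exp (z * X x) \<partial>M) / \<alpha>)) ` {0<..})"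
  proof (rule bdd_belowI2[where m = lo])
    fix z :: real assume "z \<in> {0<..}"
    then have "0 < z" by simp
    have I: "exp (z * lo) \<le> (\<integral>x. exp (z * X x) \<partial>M)"
      using exp_le_integral_exp_mult[OF assms(1,2)] \<open>0 < z\<close> by simp
    then have "z * lo \<le> ln (\<integral>x. exp (z * X x) \<partial>M)"
      by (metis exp_gt_zero exp_le_cancel_iff exp_ln less_le_trans)
    also have "\<dots> \<le> ln ((\<integral>x. exp (z * X x) \<partial>M) / \<alpha>)"
      using I assms(3,4) exp_gt_zero[of "z * lo"]
      by (subst ln_div) (auto simp: ln_le_zero_iff)
    finally show "lo \<le> 1 / z * ln ((\<integral>x. exp (z * X x) \<partial>M) / \<alpha>)"
      using \<open>0 < z\<close> by (simp add: field_simps)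
  qed
qed (use assms(5) in simp)

lemma (in prob_space) EVaR_le_integral_Lfun:
  fixes X :: "'a \<Rightarrow> real"
  assumes X: "X \<in> borel_measurable M" and bounds: "AE x in M. lo \<le> X x \<and> X x \<le> hi"
    and "0 < \<alpha>" and "\<alpha> \<le> 1" and "0 < t"
  shows "EVaR M \<alpha> X \<le> (\<integral>x. Lfun \<alpha> (X x) \<mu> t \<partial>M)"
proof -
  define I where "I = (\<integral>x. exp (1 / t * X x) \<partial>M)"
  have int: "integrable M (\<lambda>x. exp (1 / t * X x))"
    using integrable_exp_mult[OF X _, of hi "1 / t"] bounds \<open>0 < t\<close>
    by (auto elim!: eventually_mono)
  have "0 < I"
    unfolding I_def using \<open>0 < t\<close>
    by (intro less_le_trans[OF exp_gt_zero exp_le_integral_exp_mult[OF X bounds]]) simp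
  have "EVaR M \<alpha> X \<le> t * ln (I / \<alpha>)"
    using EVaR_le[OF assms(1-4), of "1 / t"] \<open>0 < t\<close> by (simp add: I_def)
  also have "\<dots> \<le> t * (\<mu> + exp (- \<mu> - 1) * (I / \<alpha>))"
    using \<open>0 < I\<close> \<open>0 < \<alpha>\<close> \<open>0 < t\<close> by (intro mult_left_mono ln_le_tangent) auto
  also have "\<dots> = t * \<mu> + t * exp (- \<mu> - ln \<alpha> - 1) * I"
    using \<open>0 < \<alpha>\<close> by (simp add: exp_diff exp_add algebra_simps)
  also have "\<dots> = (\<integral>x. Lfun \<alpha> (X x) \<mu> t \<partial>M)"
    using int by (simp add: Lfun_eq I_def prob_space)
  finally show ?thesis .
qed

lemma (in real_distribution) integral_antimono_le:
  fixes g :: "real \<Rightarrow> real"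
  assumes "antimono g" and bounds: "AE x in M. lo \<le> x \<and> x \<le> hi"
    and "measure M {..<s} \<le> \<epsilon>" and "0 \<le> \<epsilon>" and "\<epsilon> \<le> 1"
  shows "(\<integral>x. g x \<partial>M) \<le> g s * (1 - \<epsilon>) + g lo * \<epsilon>"
proof -
  have g_le: "g y \<le> g x" if "x \<le> y" for x y
    using \<open>antimono g\<close> that by (rule antimonoD)
  have "(\<lambda>x. - g x) \<in> borel_measurable borel"
    by (rule borel_measurable_mono) (simp add: mono_def g_le)
  then have g_meas: "g \<in> borel_measurable M"
    by simp
  have int: "integrable M g"
  proof (rule integrable_const_bound[where B = "\<bar>g lo\<bar> + \<bar>g hi\<bar>"])
    show "AE x in M. norm (g x) \<le> \<bar>g lo\<bar> + \<bar>g hi\<bar>"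
      using bounds
    proof eventually_elim
      case (elim x)
      then have "g hi \<le> g x" and "g x \<le> g lo" using g_le by auto
      then show ?case unfolding real_norm_def by arith
    qed
  qed (fact g_meas)
  show ?thesis
  proof (cases "lo \<le> s")
    case True
    let ?h = "\<lambda>x. g s + (g lo - g s) * indicator {..<s} x"
    have "AE x in M. g x \<le> ?h x"
      using bounds
    proof eventually_elim
      case (elim x)
      then show ?case using g_le[of lo x] g_le[of s x] by (cases "x < s") auto
    qed
    moreover have int_ind: "integrable M (\<lambda>x. (g lo - g s) * indicator {..<s} x)"
      by (intro integrable_mult_right integrable_real_indicator) (auto simp: less_top[symmetric])
    ultimately have "(\<integral>x. g x \<partial>M) \<le> (\<integral>x. ?h x \<partial>M)"
      using int by (intro integral_mono_AE) auto
    also have "\<dots> = g s + (g lo - g s) * measure M {..<s}"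
      using int_ind prob_space by (subst Bochner_Integration.integral_add) auto
    also have "\<dots> \<le> g s + (g lo - g s) * \<epsilon>"
      using True assms(3) g_le by (intro add_left_mono mult_left_mono) auto
    finally show ?thesis by (simp add: algebra_simps)
  next
    case False
    have "AE x in M. g x \<le> g lo"
      using bounds by eventually_elim (simp add: g_le)
    then have "(\<integral>x. g x \<partial>M) \<le> g lo"
      using int integral_mono_AE[of M g "\<lambda>_. g lo"] prob_space by simp
    also have "\<dots> \<le> g s * (1 - \<epsilon>) + g lo * \<epsilon>"
      using False g_le[of s lo] \<open>\<epsilon> \<le> 1\<close> mult_right_mono[of "g lo" "g s" "1 - \<epsilon>"]
      by (simp add: algebra_simps)
    finally show ?thesis .
  qed
qed

lemma (in real_distribution) EVaR_le_INF_zeta_star: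
  assumes bounds: "AE x in M. - a \<le> x \<and> x \<le> b"
    and "0 < \<alpha>" and "\<alpha> \<le> 1" and "0 \<le> \<epsilon>" and "\<epsilon> \<le> 1"
    and "k < N" and "measure M {..<r k} \<le> \<epsilon>"
  shows "EVaR M \<alpha> (\<lambda>x. - x)
           \<le> (INF (\<mu>, t) \<in> UNIV \<times> {0<..}. zeta_star \<alpha> N r \<mu> t * (1 - \<epsilon>) + Lfun \<alpha> a \<mu> t * \<epsilon>)"
proof (rule cINF_greatest)
  fix p :: "real \<times> real" assume "p \<in> UNIV \<times> {0<..}"
  then obtain \<mu> t where p: "p = (\<mu>, t)" and "0 < t" by auto
  have neg_bounds: "AE x in M. - b \<le> - x \<and> - x \<le> a"
    using bounds by (auto elim: eventually_mono)
  have anti: "antimono (\<lambda>x. Lfun \<alpha> (- x) \<mu> t)"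
    using \<open>0 < t\<close> by (intro antimonoI Lfun_mono) auto
  have "EVaR M \<alpha> (\<lambda>x. - x) \<le> (\<integral>x. Lfun \<alpha> (- x) \<mu> t \<partial>M)"
    using neg_bounds \<open>0 < t\<close> assms(2,3) by (intro EVaR_le_integral_Lfun) measurable
  also have "\<dots> \<le> Lfun \<alpha> (- r k) \<mu> t * (1 - \<epsilon>) + Lfun \<alpha> a \<mu> t * \<epsilon>"
    using integral_antimono_le[OF anti bounds assms(7,4,5)] by simp
  also have "Lfun \<alpha> (- r k) \<mu> t * (1 - \<epsilon>) + Lfun \<alpha> a \<mu> t * \<epsilon>
      \<le> zeta_star \<alpha> N r \<mu> t * (1 - \<epsilon>) + Lfun \<alpha> a \<mu> t * \<epsilon>"
    using \<open>k < N\<close> \<open>\<epsilon> \<le> 1\<close> unfolding zeta_star_def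
    by (intro add_right_mono mult_right_mono Max_ge) auto
  finally show "EVaR M \<alpha> (\<lambda>x. - x)
      \<le> (case p of (\<mu>, t) \<Rightarrow> zeta_star \<alpha> N r \<mu> t * (1 - \<epsilon>) + Lfun \<alpha> a \<mu> t * \<epsilon>)"
    by (simp add: p)
qed auto

lemma (in real_distribution) quantile_exists:
  assumes "0 < \<epsilon>" and "\<epsilon> < 1"
  obtains y where "measure M {..<y} \<le> \<epsilon>" and "measure M {y<..} \<le> 1 - \<epsilon>"
proof -
  define T where "T = {x. cdf M x \<le> \<epsilon>}"
  obtain x\<^sub>0 where "x\<^sub>0 \<in> T"
    using eventually_happens'[OF trivial_limit_at_bot_linorder order_tendstoD(2)[OF cdf_lim_at_bot \<open>0 < \<epsilon>\<close>]]
    by (auto simp: T_def intro: less_imp_le)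
  obtain x\<^sub>1 where x\<^sub>1: "\<And>x. x \<ge> x\<^sub>1 \<Longrightarrow> \<epsilon> < cdf M x"
    using order_tendstoD(1)[OF cdf_lim_at_top_prob \<open>\<epsilon> < 1\<close>] by (auto simp: eventually_at_top_linorder)
  have "bdd_above T"
    by (rule bdd_aboveI[of _ x\<^sub>1]) (metis T_def linorder_not_le mem_Collect_eq nle_le x\<^sub>1)
  define y where "y = Sup T"
  have "measure M {..<y} \<le> \<epsilon>"
  proof (rule tendsto_upperbound[OF cdf_at_left])
    have "\<forall>\<^sub>F x in at_left y. x < y"
      by (simp add: eventually_at_filter)
    then show "\<forall>\<^sub>F x in at_left y. cdf M x \<le> \<epsilon>"
    proof (rule eventually_mono)
      fix x assume "x < y"
      then obtain x' where "x' \<in> T" "x < x'"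
        using less_cSup_iff[OF _ \<open>bdd_above T\<close>] \<open>x\<^sub>0 \<in> T\<close> unfolding y_def by blast
      then show "cdf M x \<le> \<epsilon>" using cdf_nondecreasing[of x x'] by (simp add: T_def)
    qed
  qed simp
  moreover have "\<epsilon> \<le> cdf M y"
  proof (rule tendsto_lowerbound)
    show "(cdf M \<longlongrightarrow> cdf M y) (at_right y)"
      using cdf_is_right_cont by (simp add: continuous_within)
    show "\<forall>\<^sub>F x in at_right y. \<epsilon> \<le> cdf M x"
      using eventually_at_right_less
    proof (rule eventually_mono)
      fix x assume "y < x"
      then have "x \<notin> T" using cSup_upper[OF _ \<open>bdd_above T\<close>] unfolding y_def by force
      then show "\<epsilon> \<le> cdf M x" by (simp add: T_def)
    qed
  qed simp
  moreover have "measure M {y<..} = 1 - cdf M y"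
    using prob_compl[of "{..y}"] by (simp add: cdf_def Compl_eq_Diff_UNIV[symmetric] Compl_atMost)
  ultimately show thesis using that by simp
qed

lemma (in real_distribution) prob_measure_lessThan_gt:
  assumes "0 \<le> \<epsilon>" and "\<epsilon> \<le> 1"
  shows "measure M {x. \<epsilon> < measure M {..<x}} \<le> 1 - \<epsilon>"
proof -
  consider "\<epsilon> = 0" | "\<epsilon> = 1" | "0 < \<epsilon>" "\<epsilon> < 1"
    using assms by linarith
  then show ?thesis
  proof cases
    case 1
    then show ?thesis by simp
  next
    case 2
    then have "{x. \<epsilon> < measure M {..<x}} = {}"
      using prob_le_1 by (simp add: not_less)
    then show ?thesis using 2 by simp
  next
    case 3
    then obtain y where y: "measure M {..<y} \<le> \<epsilon>" "measure M {y<..} \<le> 1 - \<epsilon>"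
      by (rule quantile_exists)
    have "{x. \<epsilon> < measure M {..<x}} \<subseteq> {y<..}"
    proof (rule subsetI, rule ccontr)
      fix x assume "x \<in> {x. \<epsilon> < measure M {..<x}}" and "x \<notin> {y<..}"
      then have "\<epsilon> < measure M {..<x}" and "{..<x} \<subseteq> {..<y}" by auto
      then show False using y(1) finite_measure_mono[of "{..<x}" "{..<y}"] by simp
    qed
    then have "measure M {x. \<epsilon> < measure M {..<x}} \<le> measure M {y<..}"
      by (rule finite_measure_mono) simp
    then show ?thesis using y(2) by linarith
  qed
qed

lemma (in real_distribution) prob_exists_sample_measure_lessThan_le:
  assumes "0 \<le> \<epsilon>" and "\<epsilon> \<le> 1"
  shows "1 - (1 - \<epsilon>) ^ N \<le> measure (PiM {..<N} (\<lambda>_. M))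
           {r \<in> space (PiM {..<N} (\<lambda>_. M)). \<exists>k<N. measure M {..<r k} \<le> \<epsilon>}"
proof -
  interpret P: finite_product_prob_space "\<lambda>_. M" "{..<N}"
    by unfold_locales simp
  define B where "B = {x. \<epsilon> < measure M {..<x}}"
  have "(\<lambda>x. measure M {..<x}) \<in> borel_measurable borel"
    by (rule borel_measurable_mono) (auto intro!: monoI finite_measure_mono)
  then have B: "B \<in> sets M"
    using measurable_sets[of _ borel borel "{\<epsilon><..}"] by (simp add: B_def vimage_def)
  have "{r \<in> space (PiM {..<N} (\<lambda>_. M)). \<exists>k<N. measure M {..<r k} \<le> \<epsilon>}
        = space (PiM {..<N} (\<lambda>_. M)) - PiE {..<N} (\<lambda>_. B)"
    by (auto simp: space_PiM B_def PiE_def Pi_def not_le)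
  moreover have "P.prob (PiE {..<N} (\<lambda>_. B)) = measure M B ^ N"
    using B by (simp add: P.prob_times)
  moreover have "measure M B ^ N \<le> (1 - \<epsilon>) ^ N"
    using prob_measure_lessThan_gt[OF assms] by (simp add: B_def power_mono)
  moreover have "PiE {..<N} (\<lambda>_. B) \<in> sets (PiM {..<N} (\<lambda>_. M))"
    using B by (simp add: sets_PiM_I_finite)
  ultimately show ?thesis
    by (simp add: P.prob_compl)
qed

lemma zeta_star_eq_Lfun_Max:
  assumes "0 < N" and "0 < t"
  shows "zeta_star \<alpha> N r \<mu> t = Lfun \<alpha> (MAX k\<in>{..<N}. - r k) \<mu> t"
proof -
  have "mono (\<lambda>x. Lfun \<alpha> x \<mu> t)"
    using \<open>0 < t\<close> by (auto intro!: monoI Lfun_mono)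
  then show ?thesis
    unfolding zeta_star_def using \<open>0 < N\<close>
    by (subst mono_Max_commute) (auto simp: image_image)
qed

lemma mono_INF_Lfun:
  assumes "0 < \<alpha>" and "\<alpha> \<le> 1" and "0 \<le> \<epsilon>" and "\<epsilon> \<le> 1"
  shows "mono (\<lambda>m. INF (\<mu>, t) \<in> UNIV \<times> {0<..}. Lfun \<alpha> m \<mu> t * (1 - \<epsilon>) + Lfun \<alpha> a \<mu> t * \<epsilon>)"
proof (rule monoI, rule cINF_superset_mono)
  fix x y :: real
  assume "x \<le> y"
  show "bdd_below ((\<lambda>(\<mu>, t). Lfun \<alpha> x \<mu> t * (1 - \<epsilon>) + Lfun \<alpha> a \<mu> t * \<epsilon>) ` (UNIV \<times> {0<..}))"
  proof (rule bdd_belowI2[where m = "x * (1 - \<epsilon>) + a * \<epsilon>"])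
    fix p :: "real \<times> real" assume "p \<in> UNIV \<times> {0<..}"
    then obtain \<mu> t where "p = (\<mu>, t)" and "0 < t" by auto
    then show "x * (1 - \<epsilon>) + a * \<epsilon>
        \<le> (case p of (\<mu>, t) \<Rightarrow> Lfun \<alpha> x \<mu> t * (1 - \<epsilon>) + Lfun \<alpha> a \<mu> t * \<epsilon>)"
      using assms le_Lfun[OF \<open>0 < t\<close> assms(1,2)] by (auto intro!: add_mono mult_right_mono)
  qed
  show "(case p of (\<mu>, t) \<Rightarrow> Lfun \<alpha> x \<mu> t * (1 - \<epsilon>) + Lfun \<alpha> a \<mu> t * \<epsilon>)
      \<le> (case p of (\<mu>, t) \<Rightarrow> Lfun \<alpha> y \<mu> t * (1 - \<epsilon>) + Lfun \<alpha> a \<mu> t * \<epsilon>)"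
    if "p \<in> UNIV \<times> {0<..}" for p
    using that \<open>x \<le> y\<close> \<open>\<epsilon> \<le> 1\<close> by (auto intro!: mult_right_mono Lfun_mono)
qed auto

lemma (in real_distribution) measurable_INF_zeta_star:
  assumes "0 < N" and "0 < \<alpha>" and "\<alpha> \<le> 1" and "0 \<le> \<epsilon>" and "\<epsilon> \<le> 1"
  shows "(\<lambda>r. INF (\<mu>, t) \<in> UNIV \<times> {0<..}. zeta_star \<alpha> N r \<mu> t * (1 - \<epsilon>) + Lfun \<alpha> a \<mu> t * \<epsilon>)
           \<in> borel_measurable (PiM {..<N} (\<lambda>_. M))"
proof -
  define est where "est m = (INF (\<mu>, t) \<in> UNIV \<times> {0<..}. Lfun \<alpha> m \<mu> t * (1 - \<epsilon>) + Lfun \<alpha> a \<mu> t * \<epsilon>)"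
    for m
  have "est \<in> borel_measurable borel"
    unfolding est_def using mono_INF_Lfun[OF assms(2-5)] by (rule borel_measurable_mono)
  moreover have "(\<lambda>r. MAX k\<in>{..<N}. - r k) \<in> borel_measurable (PiM {..<N} (\<lambda>_. M))"
    by measurable
  ultimately have "(\<lambda>r. est (MAX k\<in>{..<N}. - r k)) \<in> borel_measurable (PiM {..<N} (\<lambda>_. M))"
    by (rule measurable_compose[rotated])
  moreover have "est (MAX k\<in>{..<N}. - r k)
      = (INF (\<mu>, t) \<in> UNIV \<times> {0<..}. zeta_star \<alpha> N r \<mu> t * (1 - \<epsilon>) + Lfun \<alpha> a \<mu> t * \<epsilon>)" for r
    unfolding est_def using \<open>0 < N\<close> by (intro INF_cong) (auto simp: zeta_star_eq_Lfun_Max)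
  ultimately show ?thesis by simp
qed

theorem corollary6:
  fixes M :: "real measure" and a b \<alpha> \<epsilon> :: real and N :: nat
  assumes "prob_space M" and "sets M = sets borel"
    and "a > 0" and "b > 0"
    and "AE r in M. - a \<le> r \<and> r \<le> b"
    and "0 < \<alpha>" and "\<alpha> \<le> 1"
    and "0 \<le> \<epsilon>" and "\<epsilon> \<le> 1"
    and "N \<ge> 1"
  shows "measure (PiM {..<N} (\<lambda>_. M))
           {r \<in> space (PiM {..<N} (\<lambda>_. M)).
              (INF (\<mu>, t) \<in> UNIV \<times> {0<..}.
                 zeta_star \<alpha> N r \<mu> t * (1 - \<epsilon>) + Lfun \<alpha> a \<mu> t * \<epsilon>)
              \<ge> EVaR M \<alpha> (\<lambda>x. - x)}
         \<ge> 1 - (1 - \<epsilon>) ^ N"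
proof -
  interpret real_distribution M
    using assms(1,2) by (simp add: real_distribution_def real_distribution_axioms_def)
  interpret P: prob_space "PiM {..<N} (\<lambda>_. M)"
    by (rule prob_space_PiM) (rule prob_space_axioms)
  let ?good = "{r \<in> space (PiM {..<N} (\<lambda>_. M)). \<exists>k<N. measure M {..<r k} \<le> \<epsilon>}"
  let ?est = "\<lambda>r. INF (\<mu>, t) \<in> UNIV \<times> {0<..}. zeta_star \<alpha> N r \<mu> t * (1 - \<epsilon>) + Lfun \<alpha> a \<mu> t * \<epsilon>"
  have "1 - (1 - \<epsilon>) ^ N \<le> P.prob ?good"
    using assms(8,9) by (rule prob_exists_sample_measure_lessThan_le)
  also have "\<dots> \<le> P.prob {r \<in> space (PiM {..<N} (\<lambda>_. M)). EVaR M \<alpha> (\<lambda>x. - x) \<le> ?est r}"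
  proof (rule P.finite_measure_mono)
    show "?good \<subseteq> {r \<in> space (PiM {..<N} (\<lambda>_. M)). EVaR M \<alpha> (\<lambda>x. - x) \<le> ?est r}"
      using EVaR_le_INF_zeta_star[OF assms(5-9)] by blast
    have "?est \<in> borel_measurable (PiM {..<N} (\<lambda>_. M))"
      using assms(6-10) by (intro measurable_INF_zeta_star) auto
    then show "{r \<in> space (PiM {..<N} (\<lambda>_. M)). EVaR M \<alpha> (\<lambda>x. - x) \<le> ?est r} \<in> P.events"
      by measurable
  qed
  finally show ?thesis .
qed

end
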